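(* Let $A\in\mathbb{R}^{n\times n}$ be stable and Metzler. Let $\mathcal{C}_1,\dots,\mathcal{C}_r$ be nonempty, pairwise disjoint subsets of $\{1,\dots,n\}$ whose union is $\{1,\dots,n\}$, let $\Pi\in\mathbb{R}^{n\times r}$ with $\Pi_{ij}=1$ if $i\in\mathcal{C}_j$ and $0$ otherwise, let $\alpha\ge 0$, and let $A_r^{(0)}:=(\Pi^\top\Pi)^{-1}\Pi^\top A\Pi-\alpha I_r$ be stable and irreducible. Let $\mu_1$ be the real eigenvalue of $A_r^{(0)}$ with $\mu_1<0$ and ${\rm Re}(\mu)<\mu_1$ for every other eigenvalue $\mu$ of $A_r^{(0)}$, and let $v_1,w_1$ be positive vectors with $A_r^{(0)}v_1=\mu_1 v_1$, $w_1^\top A_r^{(0)}=\mu_1 w_1^\top$, $w_1^\top v_1=1$. For any real $\epsilon>0$ with $\mu_1+\epsilon\le 0$, define $$\bar{A}_r:=A_r^{(0)}-(\mu_1+\epsilon)v_1w_1^\top .$$ Then for any real $\gamma>0$ satisfying $-\gamma I_r\le A_r^{(0)}$ (entrywise), every matrix in $$S_{A_r}(A_r^{(0)},\epsilon,\gamma):=\{A_r\in\mathbb{R}^{r\times r}\,:\,-\gamma I_r\le A_r\le \bar{A}_r\}$$ is stable and Metzler, and $A_r^{(0)}\in S_{A_r}(A_r^{(0)},\epsilon,\gamma)$. Moreover, for every $A_r\in S_{A_r}(A_r^{(0)},\epsilon,\gamma)$, the real parts of all eigenvalues of $A_r$ are less than or equal to $-\epsilon$.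
   Context: For matrices $M,N$ of the same size, $M\le N$ means $M_{ij}\le N_{ij}$ for all $(i,j)$. A matrix is stable if all its eigenvalues have negative real part, and Metzler if all its off-diagonal entries are nonnegative. $A_r^{(0)}$ irreducible means the directed graph on $\{1,\dots,r\}$ with an edge $i\to j$ whenever $i\ne j$ and $(A_r^{(0)})_{ij}\ne 0$ is strongly connected. (Such $\mu_1,v_1,w_1$ exist under these hypotheses.) *)

theory Defs
  imports "HOL-Analysis.Analysis"
begin

definition cmat :: "real^'n^'n \<Rightarrow> complex^'n^'n" where
  "cmat A = (\<chi> i j. complex_of_real (A $ i $ j))"

definition is_eigenvalue :: "real^'n^'n \<Rightarrow> complex \<Rightarrow> bool" where
  "is_eigenvalue A \<mu> \<longleftrightarrow> (\<exists>x::complex^'n. x \<noteq> 0 \<and> cmat A *v x = \<mu> *s x)"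

definition stable :: "real^'n^'n \<Rightarrow> bool" where
  "stable A \<longleftrightarrow> (\<forall>\<mu>. is_eigenvalue A \<mu> \<longrightarrow> Re \<mu> < 0)"

definition metzler :: "real^'n^'n \<Rightarrow> bool" where
  "metzler A \<longleftrightarrow> (\<forall>i j. i \<noteq> j \<longrightarrow> A $ i $ j \<ge> 0)"

text \<open>Irreducible: the digraph with edges i \<rightarrow> j for i \<noteq> j and A_ij \<noteq> 0 is strongly connected.\<close>
definition irreducible_mat :: "real^'n^'n \<Rightarrow> bool" where
  "irreducible_mat A \<longleftrightarrow>
     (\<forall>i j. (i, j) \<in> {(k, l). k \<noteq> l \<and> A $ k $ l \<noteq> 0}\<^sup>*)"

definition mat_le :: "real^'m^'n \<Rightarrow> real^'m^'n \<Rightarrow> bool" where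
  "mat_le M N \<longleftrightarrow> (\<forall>i j. M $ i $ j \<le> N $ i $ j)"

definition outer :: "real^'n \<Rightarrow> real^'n \<Rightarrow> real^'n^'n" where
  "outer v w = (\<chi> i j. v $ i * w $ j)"

definition S_Ar :: "real^'r^'r \<Rightarrow> real^'r \<Rightarrow> real^'r \<Rightarrow> real \<Rightarrow> real \<Rightarrow> real \<Rightarrow> (real^'r^'r) set" where
  "S_Ar A0 v1 w1 \<mu>1 \<epsilon> \<gamma> =
     {Ar. mat_le (- (\<gamma> *\<^sub>R mat 1)) Ar \<and> mat_le Ar (A0 - (\<mu>1 + \<epsilon>) *\<^sub>R outer v1 w1)}"

end

theory Submission
  imports Defs
begin

text \<open>
  Because w1 \<bullet> v1 = 1, the rank-one shift only moves the eigenvalue \<mu>1 of A_r^(0), so the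
  shifted matrix satisfies Abar_r v1 = -\<epsilon> v1. Every A_r with -\<gamma> I \<le> A_r \<le> Abar_r has
  nonnegative off-diagonal entries and, as v1 > 0, satisfies A_r v1 \<le> -\<epsilon> v1 entrywise.
  A Gershgorin estimate in the norm weighted by v1 then bounds the real part of every
  eigenvalue of such a Metzler matrix by -\<epsilon>. The hypotheses on A, on \<Pi> and the
  irreducibility of A_r^(0) only guarantee that \<mu>1, v1, w1 exist; the proof does not use them.
\<close>

lemma weighted_max_component:
  fixes x :: "'a::real_normed_vector^'n::finite" and v :: "real^'n"
  assumes "x \<noteq> 0" and v_pos: "\<And>j. v $ j > 0"
  obtains i t where "t > 0" "norm (x $ i) = t * v $ i" "\<And>j. norm (x $ j) \<le> t * v $ j"
proof -
  define f where "f j = norm (x $ j) / v $ j" for j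
  have "Max (range f) \<in> range f"
    by (rule Max_in) auto
  then obtain i where i: "f i = Max (range f)"
    by (metis rangeE)
  have f_le: "f j \<le> f i" for j
    unfolding i by simp
  obtain k where "x $ k \<noteq> 0"
    using \<open>x \<noteq> 0\<close> by (metis vec_eq_iff zero_index)
  then have "f k > 0"
    unfolding f_def using v_pos[of k] by simp
  with f_le[of k] have "f i > 0" by linarith
  moreover have "norm (x $ i) = f i * v $ i"
    using v_pos[of i] unfolding f_def by simp
  moreover have "norm (x $ j) \<le> f i * v $ j" for j
    using f_le[of j] v_pos[of j] unfolding f_def by (simp add: divide_le_eq)
  ultimately show thesis by (rule that)
qed

lemma metzler_eigenvalue_Re_le:
  fixes M :: "real^'n::finite^'n" and v :: "real^'n"
  assumes metzler: "metzler M" and v_pos: "\<And>i. v $ i > 0"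
    and Mv_le: "\<And>i. (M *v v) $ i \<le> c * v $ i"
    and "is_eigenvalue M \<mu>"
  shows "Re \<mu> \<le> c"
proof -
  obtain x :: "complex^'n" where "x \<noteq> 0" and eigvec: "cmat M *v x = \<mu> *s x"
    using \<open>is_eigenvalue M \<mu>\<close> unfolding is_eigenvalue_def by blast
  then obtain i t where t_pos: "t > 0" and x_i: "norm (x $ i) = t * v $ i"
    and x_le: "\<And>j. norm (x $ j) \<le> t * v $ j"
    using v_pos weighted_max_component by blast
  let ?J = "UNIV - {i}"
  have "\<mu> * x $ i = (\<Sum>j\<in>UNIV. of_real (M $ i $ j) * x $ j)"
    using arg_cong[OF eigvec, of "\<lambda>y. y $ i"] by (simp add: matrix_vector_mult_def cmat_def)
  then have row: "(\<mu> - of_real (M $ i $ i)) * x $ i = (\<Sum>j\<in>?J. of_real (M $ i $ j) * x $ j)"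
    by (simp add: sum.remove algebra_simps)
  have "norm (\<mu> - of_real (M $ i $ i)) * (t * v $ i)
      = norm (\<Sum>j\<in>?J. of_real (M $ i $ j) * x $ j)"
    using row x_i by (metis norm_mult)
  also have "\<dots> \<le> (\<Sum>j\<in>?J. M $ i $ j * (t * v $ j))"
  proof (rule order_trans[OF norm_sum sum_mono])
    fix j assume "j \<in> ?J"
    then have "M $ i $ j \<ge> 0"
      using metzler unfolding metzler_def by auto
    then show "norm (of_real (M $ i $ j) * x $ j) \<le> M $ i $ j * (t * v $ j)"
      using x_le[of j] by (simp add: norm_mult mult_left_mono)
  qed
  also have "\<dots> = t * ((M *v v) $ i - M $ i $ i * v $ i)"
    by (simp add: matrix_vector_mult_def sum.remove sum_distrib_left algebra_simps)
  also have "\<dots> \<le> (c - M $ i $ i) * (t * v $ i)"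
    using Mv_le[of i] t_pos by (simp add: algebra_simps)
  finally have "norm (\<mu> - of_real (M $ i $ i)) \<le> c - M $ i $ i"
    using t_pos v_pos[of i] by (simp add: mult_le_cancel_right_pos)
  with complex_Re_le_cmod[of "\<mu> - of_real (M $ i $ i)"] show ?thesis
    by simp
qed

lemma metzler_stableI:
  fixes M :: "real^'n::finite^'n" and v :: "real^'n"
  assumes "metzler M" and "\<And>i. v $ i > 0" and "\<And>i. (M *v v) $ i \<le> c * v $ i" and "c < 0"
  shows "stable M"
  using metzler_eigenvalue_Re_le[OF assms(1-3)] \<open>c < 0\<close> unfolding stable_def by fastforce

lemma metzler_mat_le_mono:
  assumes "metzler N" and "mat_le N M"
  shows "metzler M"
  using assms unfolding metzler_def mat_le_def by (meson order_trans)

lemma metzler_scaled_identity: "metzler (c *\<^sub>R mat 1 :: real^'n^'n)"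
  by (simp add: metzler_def mat_def)

lemma mat_le_mult_nonneg_vec:
  fixes M N :: "real^'m::finite^'n" and v :: "real^'m"
  assumes "mat_le M N" and "\<And>j. v $ j \<ge> 0"
  shows "(M *v v) $ i \<le> (N *v v) $ i"
  using assms unfolding matrix_vector_mult_def mat_le_def
  by (auto intro!: sum_mono mult_right_mono)

lemma outer_mult_vec: "outer v w *v x = (w \<bullet> x) *\<^sub>R v"
  by (simp add: vec_eq_iff outer_def matrix_vector_mult_def inner_vec_def
      sum_distrib_left algebra_simps)

lemma rank_one_shift_eigenvector:
  fixes A :: "real^'n::finite^'n"
  assumes "A *v v = \<mu> *\<^sub>R v" and "w \<bullet> v = 1"
  shows "(A - c *\<^sub>R outer v w) *v v = (\<mu> - c) *\<^sub>R v"
  using assms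
  by (simp add: matrix_vector_mult_diff_rdistrib outer_mult_vec algebra_simps
      flip: scaleR_matrix_vector_assoc)

lemma mat_le_minus_nonpos_outer:
  assumes "c \<le> 0" and "\<And>i. v $ i \<ge> 0" and "\<And>j. w $ j \<ge> 0"
  shows "mat_le A (A - c *\<^sub>R outer v w)"
  using assms unfolding mat_le_def outer_def
  by (simp add: mult_nonpos_nonneg)

theorem theorem1:
  fixes A :: "real^'n^'n" and C :: "'r::finite \<Rightarrow> 'n::finite set" and Pm :: "real^'r^'n"
    and \<alpha> :: real and A0 :: "real^'r^'r"
    and \<mu>1 :: real and v1 w1 :: "real^'r" and \<epsilon> \<gamma> :: real
  assumes "stable A" and "metzler A"
    and "\<And>j. C j \<noteq> {}"
    and "\<And>j k. j \<noteq> k \<Longrightarrow> C j \<inter> C k = {}"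
    and "(\<Union>j. C j) = UNIV"
    and "\<And>i j. Pm $ i $ j = (if i \<in> C j then 1 else 0)"
    and "\<alpha> \<ge> 0"
    and A0_def: "A0 = matrix_inv (transpose Pm ** Pm) ** transpose Pm ** A ** Pm - \<alpha> *\<^sub>R mat 1"
    and "stable A0" and "irreducible_mat A0"
    and "is_eigenvalue A0 (complex_of_real \<mu>1)" and "\<mu>1 < 0"
    and "\<And>\<mu>. is_eigenvalue A0 \<mu> \<Longrightarrow> \<mu> \<noteq> complex_of_real \<mu>1 \<Longrightarrow> Re \<mu> < \<mu>1"
    and "\<And>i. v1 $ i > 0" and "\<And>i. w1 $ i > 0"
    and "A0 *v v1 = \<mu>1 *\<^sub>R v1" and "w1 v* A0 = \<mu>1 *\<^sub>R w1"
    and "w1 \<bullet> v1 = 1"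
    and "\<epsilon> > 0" and "\<mu>1 + \<epsilon> \<le> 0"
    and "\<gamma> > 0" and "mat_le (- (\<gamma> *\<^sub>R mat 1)) A0"
  shows "(\<forall>Ar \<in> S_Ar A0 v1 w1 \<mu>1 \<epsilon> \<gamma>. stable Ar \<and> metzler Ar)
         \<and> A0 \<in> S_Ar A0 v1 w1 \<mu>1 \<epsilon> \<gamma>
         \<and> (\<forall>Ar \<in> S_Ar A0 v1 w1 \<mu>1 \<epsilon> \<gamma>. \<forall>\<mu>. is_eigenvalue Ar \<mu> \<longrightarrow> Re \<mu> \<le> - \<epsilon>)"
proof -
  let ?S = "S_Ar A0 v1 w1 \<mu>1 \<epsilon> \<gamma>"
  have v1_pos: "\<And>i. v1 $ i > 0" and w1_pos: "\<And>i. w1 $ i > 0"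
    by fact+
  have shift_v1: "(A0 - (\<mu>1 + \<epsilon>) *\<^sub>R outer v1 w1) *v v1 = (- \<epsilon>) *\<^sub>R v1"
    using rank_one_shift_eigenvector[of A0 v1 \<mu>1 w1 "\<mu>1 + \<epsilon>"]
      \<open>A0 *v v1 = \<mu>1 *\<^sub>R v1\<close> \<open>w1 \<bullet> v1 = 1\<close> by simp
  have metzler_S: "metzler Ar" if "Ar \<in> ?S" for Ar
    using that metzler_mat_le_mono[OF metzler_scaled_identity[of "- \<gamma>"]]
    unfolding S_Ar_def by auto
  have Ar_v1_le: "(Ar *v v1) $ i \<le> - \<epsilon> * v1 $ i" if "Ar \<in> ?S" for Ar i
    using that mat_le_mult_nonneg_vec[of Ar _ v1 i] v1_pos shift_v1
    unfolding S_Ar_def by (fastforce intro: less_imp_le)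
  have "A0 \<in> ?S"
    using \<open>\<mu>1 + \<epsilon> \<le> 0\<close> \<open>mat_le (- (\<gamma> *\<^sub>R mat 1)) A0\<close> v1_pos w1_pos
    unfolding S_Ar_def by (auto intro: mat_le_minus_nonpos_outer less_imp_le)
  moreover have "Re \<mu> \<le> - \<epsilon>" if "Ar \<in> ?S" "is_eigenvalue Ar \<mu>" for Ar \<mu>
    using metzler_eigenvalue_Re_le[OF metzler_S v1_pos Ar_v1_le] that by blast
  moreover have "stable Ar" if "Ar \<in> ?S" for Ar
    using metzler_stableI[OF metzler_S v1_pos Ar_v1_le] that \<open>\<epsilon> > 0\<close> by simp
  ultimately show ?thesis
    using metzler_S by blast
qed

end
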